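(* Let $n$ be sufficiently large and let $K_{2n+1}$ be ND-coloured. Let $x,y\in V(K_{2n+1})$ be distinct vertices, let $c_1,c_2\in C(K_{2n+1})$ be distinct colours, and let $X\subseteq V(K_{2n+1})$ and $C\subseteq C(K_{2n+1})$ satisfy $|X|\leq n/25$ and $|C|\leq n/25$. Then there is a set $C'\subseteq C(K_{2n+1})\setminus (C\cup\{c_1,c_2\})$ with $|C'|=6$ such that, for each $i\in \{1,2\}$, there is a $(C'\cup\{c_i\})$-rainbow $x,y$-path of length 7 all of whose interior vertices lie in $V(K_{2n+1})\setminus X$.
   Context: ND-colouring of $K_{2n+1}$: vertex set $\{0,\dots,2n\}$, edge $ij$ has colour $k\in\{1,\dots,n\}$ where $i-j\equiv\pm k\pmod{2n+1}$; $C(K_{2n+1})=\{1,\dots,n\}$. A graph is $D$-rainbow if its edges have distinct colours all in $D$. Length of a path is its number of edges. *)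

theory Defs
  imports Main
begin

definition nd_vertices :: "nat \<Rightarrow> nat set" where
  "nd_vertices n = {0..2*n}"

definition nd_colours :: "nat \<Rightarrow> nat set" where
  "nd_colours n = {1..n}"

text \<open>Colour of edge ij: the k in 1..n with i - j = +-k mod (2n+1).\<close>
definition nd_col :: "nat \<Rightarrow> nat \<Rightarrow> nat \<Rightarrow> nat" where
  "nd_col n i j = (let m = 2*n+1; d = (i + m - j mod m) mod m in min d (m - d))"

definition path_edges :: "nat list \<Rightarrow> (nat \<times> nat) list" where
  "path_edges P = zip (butlast P) (tl P)"

definition path_colours :: "nat \<Rightarrow> nat list \<Rightarrow> nat list" where
  "path_colours n P = map (\<lambda>(i,j). nd_col n i j) (path_edges P)"

definition is_xy_path :: "nat \<Rightarrow> nat \<Rightarrow> nat \<Rightarrow> nat \<Rightarrow> nat list \<Rightarrow> bool" where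
  "is_xy_path n x y L P \<longleftrightarrow> length P = L + 1 \<and> distinct P \<and>
     set P \<subseteq> nd_vertices n \<and> hd P = x \<and> last P = y"

definition rainbow :: "nat \<Rightarrow> nat set \<Rightarrow> nat list \<Rightarrow> bool" where
  "rainbow n D P \<longleftrightarrow> distinct (path_colours n P) \<and> set (path_colours n P) \<subseteq> D"

definition interior :: "nat list \<Rightarrow> nat set" where
  "interior P = set (butlast (tl P))"

end

theory Submission
  imports Defs
begin

(*
  Identify the vertices with the residues modulo 2n+1; an edge then has colour k iff its
  endpoints differ by +-k. Let s = (c1+c2)/2 modulo 2n+1. For every t the paths
  e, e+t, e+c1+t, e+s and e, e-t, e+c2-t, e+s have the colours t, c1, s-c1-t and
  t, c2, s-c2+t, where s-c2+t = -(s-c1-t): both use the colours {t, s-c1-t} besides c1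
  resp. c2. The two required paths are one edge from x to some e, this switch from e to e+s,
  and a common path of three edges from e+s to y. The free steps (the first edge, t, and two
  steps of the last part) are chosen one at a time: every requirement on a step excludes at
  most one or two residues per forbidden vertex or colour, and with |X|, |C| <= n/25 these
  are fewer than 2n+1.
*)

section \<open>Residues modulo 2n+1\<close>

definition nd_modulus :: "nat \<Rightarrow> int" where
  "nd_modulus n = 2 * int n + 1"

definition nd_vertex :: "nat \<Rightarrow> int \<Rightarrow> nat" where
  "nd_vertex n z = nat (z mod nd_modulus n)"

definition nd_colour :: "nat \<Rightarrow> int \<Rightarrow> nat" where
  "nd_colour n z = nat (min (z mod nd_modulus n) (nd_modulus n - z mod nd_modulus n))"

(* n + 1 is the inverse of 2 modulo 2n + 1 *)
definition nd_half :: "nat \<Rightarrow> int \<Rightarrow> int" where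
  "nd_half n z = (int n + 1) * z"

lemma nd_modulus_pos [simp]: "nd_modulus n > 0"
  by (simp add: nd_modulus_def)

lemma nat_nd_modulus [simp]: "nat (nd_modulus n) = 2 * n + 1"
  by (simp add: nd_modulus_def)

lemma not_dvd_nd_modulus_if_small:
  "z \<noteq> 0 \<Longrightarrow> \<bar>z\<bar> \<le> 2 * int n \<Longrightarrow> \<not> nd_modulus n dvd z"
  using dvd_imp_le_int[of z "nd_modulus n"] by (auto simp: nd_modulus_def)

lemma nd_modulus_dvd_double_iff: "nd_modulus n dvd 2 * z \<longleftrightarrow> nd_modulus n dvd z"
proof
  assume "nd_modulus n dvd 2 * z"
  then have "nd_modulus n dvd (int n + 1) * (2 * z) - nd_modulus n * z"
    by simp
  also have "(int n + 1) * (2 * z) - nd_modulus n * z = z"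
    by (simp add: nd_modulus_def algebra_simps)
  finally show "nd_modulus n dvd z" .
qed simp

lemma not_nd_modulus_dvd_if_double:
  assumes "nd_modulus n dvd 2 * q - p" "\<not> nd_modulus n dvd p"
  shows "\<not> nd_modulus n dvd q"
proof
  assume "nd_modulus n dvd q"
  then have "nd_modulus n dvd 2 * q"
    by simp
  then have "nd_modulus n dvd 2 * q - (2 * q - p)"
    using assms(1) by (rule dvd_diff)
  with assms(2) show False
    by simp
qed

lemma nd_modulus_dvd_double_nd_half: "nd_modulus n dvd 2 * nd_half n z - z"
proof -
  have "2 * nd_half n z - z = nd_modulus n * z"
    by (simp add: nd_half_def nd_modulus_def algebra_simps)
  then show ?thesis
    by simp
qed

lemma nd_vertex_le [simp]: "nd_vertex n z \<le> 2 * n"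
  using pos_mod_bound[of "nd_modulus n" z] by (simp add: nd_vertex_def nd_modulus_def nat_le_iff)

lemma nd_vertex_in_nd_vertices [simp]: "nd_vertex n z \<in> nd_vertices n"
  using nd_vertex_le by (simp add: nd_vertices_def)

lemma nd_vertex_of_nat [simp]: "x \<le> 2 * n \<Longrightarrow> nd_vertex n (int x) = x"
  by (simp add: nd_vertex_def nd_modulus_def)

lemma nd_vertex_eq_iff: "nd_vertex n a = nd_vertex n b \<longleftrightarrow> nd_modulus n dvd a - b"
  by (simp add: nd_vertex_def eq_nat_nat_iff mod_eq_dvd_iff)

lemma nd_vertex_plus_nd_vertex: "nd_vertex n (int (nd_vertex n a) + b) = nd_vertex n (a + b)"
  by (simp add: nd_vertex_def mod_add_left_eq)

lemma nd_colour_uminus [simp]: "nd_colour n (- z) = nd_colour n z"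
  by (cases "z mod nd_modulus n = 0") (simp_all add: nd_colour_def zmod_zminus1_eq_if min.commute)

lemma nd_colour_of_nat [simp]: "k \<le> n \<Longrightarrow> nd_colour n (int k) = k"
  by (simp add: nd_colour_def nd_modulus_def)

lemma nd_colour_le: "nd_colour n z \<le> n"
  using pos_mod_sign[of "nd_modulus n" z] pos_mod_bound[of "nd_modulus n" z]
  by (simp add: nd_colour_def nd_modulus_def nat_le_iff min_def)

lemma nd_colour_in_nd_colours:
  assumes "\<not> nd_modulus n dvd z"
  shows "nd_colour n z \<in> nd_colours n"
proof -
  define r where "r = z mod nd_modulus n"
  have "0 < r" "r < 2 * int n + 1"
    using assms pos_mod_sign[of "nd_modulus n" z] pos_mod_bound[of "nd_modulus n" z]
    by (auto simp: r_def dvd_eq_mod_eq_0 order_le_less nd_modulus_def)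
  then show ?thesis
    unfolding nd_colour_def nd_colours_def r_def[symmetric] by (auto simp: nd_modulus_def min_def)
qed

lemma nd_colour_eq_iff:
  "nd_colour n a = nd_colour n b \<longleftrightarrow> nd_modulus n dvd a - b \<or> nd_modulus n dvd a + b"
proof -
  define m r s where "m = nd_modulus n" and "r = a mod m" and "s = b mod m"
  have bounds: "0 \<le> r" "r < m" "0 \<le> s" "s < m"
    by (simp_all add: m_def r_def s_def)
  have "nd_colour n a = nd_colour n b \<longleftrightarrow> r = s \<or> r + s = m"
    using bounds unfolding nd_colour_def m_def[symmetric] r_def[symmetric] s_def[symmetric]
    by (auto simp: min_def eq_nat_nat_iff)
  moreover have "m dvd a - b \<longleftrightarrow> r = s"
    by (simp add: r_def s_def mod_eq_dvd_iff)
  moreover have "m dvd a + b \<longleftrightarrow> m dvd r + s"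
    by (simp add: r_def s_def dvd_eq_mod_eq_0 mod_add_eq)
  moreover have "m dvd r + s \<longleftrightarrow> r + s = 0 \<or> r + s = m"
  proof
    assume "m dvd r + s"
    then obtain k where k: "r + s = m * k" by (auto simp: dvd_def)
    have "0 \<le> m * k" "m * k < m * 2"
      using bounds k by linarith+
    moreover have "0 < m" by (simp add: m_def)
    ultimately have "0 \<le> k" "k < 2"
      by (simp_all add: zero_le_mult_iff)
    then have "k = 0 \<or> k = 1" by linarith
    with k show "r + s = 0 \<or> r + s = m" by auto
  qed auto
  ultimately show ?thesis
    using bounds by (auto simp: m_def)
qed

lemma nd_colours_not_dvd:
  assumes "c1 \<in> nd_colours n" "c2 \<in> nd_colours n" "c1 \<noteq> c2"
  shows "\<not> nd_modulus n dvd int c1" "\<not> nd_modulus n dvd int c2"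
    and "\<not> nd_modulus n dvd int c1 + int c2" "\<not> nd_modulus n dvd int c2 - int c1"
proof -
  show "\<not> nd_modulus n dvd int c1" "\<not> nd_modulus n dvd int c2"
      "\<not> nd_modulus n dvd int c1 + int c2"
    using assms(1,2) by (simp_all add: nd_colours_def not_dvd_nd_modulus_if_small)
  show "\<not> nd_modulus n dvd int c2 - int c1"
    using assms by (intro not_dvd_nd_modulus_if_small) (auto simp: nd_colours_def)
qed

lemma nd_half_sum_not_dvd:
  assumes "c1 \<in> nd_colours n" "c2 \<in> nd_colours n" "c1 \<noteq> c2"
  shows "\<not> nd_modulus n dvd nd_half n (int c1 + int c2)"
    and "\<not> nd_modulus n dvd nd_half n (int c1 + int c2) - int c1"
proof -
  note not_dvd = nd_colours_not_dvd[OF assms]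
  let ?s = "nd_half n (int c1 + int c2)"
  have half: "nd_modulus n dvd 2 * ?s - (int c1 + int c2)"
    by (rule nd_modulus_dvd_double_nd_half)
  then show "\<not> nd_modulus n dvd ?s"
    using not_dvd(3) by (rule not_nd_modulus_dvd_if_double)
  have "2 * (?s - int c1) - (int c2 - int c1) = 2 * ?s - (int c1 + int c2)"
    by simp
  with half show "\<not> nd_modulus n dvd ?s - int c1"
    using not_dvd(4) by (metis not_nd_modulus_dvd_if_double)
qed

lemma nd_colour_switch_last_edges:
  assumes "nd_modulus n dvd 2 * s - (a + b)"
  shows "nd_colour n (s - b - - t) = nd_colour n (s - a - t)"
proof -
  have "(s - b - - t) + (s - a - t) = 2 * s - (a + b)"
    by simp
  with assms have "nd_modulus n dvd (s - b - - t) + (s - a - t)"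
    by (simp only:)
  then show ?thesis
    unfolding nd_colour_eq_iff by (rule disjI2)
qed

lemma nd_col_nd_vertex: "nd_col n (nd_vertex n a) (nd_vertex n b) = nd_colour n (a - b)"
proof -
  define m where "m = 2 * n + 1"
  define i j where "i = nd_vertex n a" and "j = nd_vertex n b"
  define d where "d = (i + m - j mod m) mod m"
  have M: "nd_modulus n = int m"
    by (simp add: m_def nd_modulus_def)
  have "0 < int m"
    by (simp add: m_def)
  have "i < m" "j < m"
    using nd_vertex_le by (auto simp: m_def i_def j_def less_Suc_eq_le)
  then have "int d = int (i + m - j) mod int m"
    by (simp add: d_def of_nat_mod)
  also have "int (i + m - j) = (int i - int j) + int m"
    using \<open>j < m\<close> by simp
  also have "((int i - int j) + int m) mod int m = (int i - int j) mod int m"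
    by (rule mod_add_self2)
  also have "\<dots> = (a mod int m - b mod int m) mod int m"
    using \<open>0 < int m\<close> by (simp add: i_def j_def nd_vertex_def M)
  also have "\<dots> = (a - b) mod int m"
    by (rule mod_diff_eq)
  finally have d: "int d = (a - b) mod int m" .
  have "d < m"
    by (simp add: d_def m_def)
  have "nd_colour n (a - b) = nat (min (int d) (int m - int d))"
    by (simp add: nd_colour_def M d)
  also have "\<dots> = min d (m - d)"
    using \<open>d < m\<close> by (auto simp: min_def)
  also have "\<dots> = nd_col n i j"
    by (simp add: nd_col_def Let_def d_def m_def)
  finally show ?thesis
    by (simp add: i_def j_def)
qed

section \<open>Counting excluded residues\<close>

lemma card_insert_le_Suc: "card (insert x A) \<le> Suc (card A)"
  by (cases "finite A") (simp_all add: card_insert_if)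

definition bad_residues :: "nat \<Rightarrow> (int \<Rightarrow> bool) \<Rightarrow> int set" where
  "bad_residues n P = {r \<in> {0..<nd_modulus n}. \<not> P r}"

lemma finite_bad_residues [simp]: "finite (bad_residues n P)"
  by (rule finite_subset[of _ "{0..<nd_modulus n}"]) (auto simp: bad_residues_def)

lemma ex_good_residue:
  assumes "card (bad_residues n P) \<le> k" "k \<le> 2 * n"
  shows "\<exists>r. P r"
proof (rule ccontr)
  assume "\<nexists>r. P r"
  then have "bad_residues n P = {0..<nd_modulus n}"
    by (auto simp: bad_residues_def)
  with assms show False
    by simp
qed

lemma card_bad_residues_mono:
  assumes "\<And>r. \<not> P r \<Longrightarrow> \<not> Q r" "card (bad_residues n Q) \<le> k"
  shows "card (bad_residues n P) \<le> k"
proof -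
  have "bad_residues n P \<subseteq> bad_residues n Q"
    using assms(1) by (auto simp: bad_residues_def)
  then show ?thesis
    using assms(2) card_mono[OF finite_bad_residues] by (meson le_trans)
qed

lemma card_bad_residues_conj:
  assumes "card (bad_residues n P) \<le> k" "card (bad_residues n Q) \<le> l"
  shows "card (bad_residues n (\<lambda>r. P r \<and> Q r)) \<le> k + l"
proof -
  have "bad_residues n (\<lambda>r. P r \<and> Q r) = bad_residues n P \<union> bad_residues n Q"
    by (auto simp: bad_residues_def)
  then show ?thesis
    using assms card_Un_le[of "bad_residues n P" "bad_residues n Q"] by simp
qed

lemma card_bad_residues_Ball:
  assumes "finite A" "\<And>a. a \<in> A \<Longrightarrow> card (bad_residues n (P a)) \<le> k"
  shows "card (bad_residues n (\<lambda>r. \<forall>a\<in>A. P a r)) \<le> k * card A"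
proof -
  have "bad_residues n (\<lambda>r. \<forall>a\<in>A. P a r) = (\<Union>a\<in>A. bad_residues n (P a))"
    by (auto simp: bad_residues_def)
  also have "card \<dots> \<le> (\<Sum>a\<in>A. card (bad_residues n (P a)))"
    by (rule card_UN_le[OF assms(1)])
  also have "\<dots> \<le> k * card A"
    using sum_bounded_above[of A "\<lambda>a. card (bad_residues n (P a))" k] assms(2)
    by (simp add: mult.commute)
  finally show ?thesis .
qed

lemma card_bad_residues_le_1:
  assumes "\<And>r s. r \<in> bad_residues n P \<Longrightarrow> s \<in> bad_residues n P \<Longrightarrow> nd_modulus n dvd r - s"
  shows "card (bad_residues n P) \<le> 1"
proof -
  have "r = s" if "r \<in> bad_residues n P" "s \<in> bad_residues n P" for r s
  proof -
    have "\<bar>r - s\<bar> < nd_modulus n"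
      using that by (auto simp: bad_residues_def)
    then show "r = s"
      using assms[OF that] dvd_imp_le_int[of "r - s" "nd_modulus n"] by fastforce
  qed
  then show ?thesis
    by (simp add: card_le_Suc0_iff_eq)
qed

lemma card_bad_residues_dvd: "card (bad_residues n (\<lambda>r. \<not> nd_modulus n dvd c - r)) \<le> 1"
proof (rule card_bad_residues_le_1)
  fix r s assume "r \<in> bad_residues n (\<lambda>r. \<not> nd_modulus n dvd c - r)"
    "s \<in> bad_residues n (\<lambda>r. \<not> nd_modulus n dvd c - r)"
  then have "nd_modulus n dvd c - s" "nd_modulus n dvd c - r"
    by (simp_all add: bad_residues_def)
  then have "nd_modulus n dvd (c - s) - (c - r)"
    by (rule dvd_diff)
  then show "nd_modulus n dvd r - s"
    by simp
qed

lemma card_bad_residues_vertex_plus: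
  assumes "finite X"
  shows "card (bad_residues n (\<lambda>r. nd_vertex n (a + r) \<notin> X)) \<le> card X"
proof -
  have "card (bad_residues n (\<lambda>r. nd_vertex n (a + r) \<noteq> v)) \<le> 1" for v
  proof (rule card_bad_residues_le_1)
    fix r s assume "r \<in> bad_residues n (\<lambda>r. nd_vertex n (a + r) \<noteq> v)"
      "s \<in> bad_residues n (\<lambda>r. nd_vertex n (a + r) \<noteq> v)"
    then have "nd_vertex n (a + r) = nd_vertex n (a + s)"
      by (simp add: bad_residues_def)
    then have "nd_modulus n dvd (a + r) - (a + s)"
      by (simp only: nd_vertex_eq_iff)
    then show "nd_modulus n dvd r - s"
      by simp
  qed
  then have "card (bad_residues n (\<lambda>r. \<forall>v\<in>X. nd_vertex n (a + r) \<noteq> v)) \<le> 1 * card X"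
    by (intro card_bad_residues_Ball[OF assms])
  moreover have "(\<lambda>r. \<forall>v\<in>X. nd_vertex n (a + r) \<noteq> v) = (\<lambda>r. nd_vertex n (a + r) \<notin> X)"
    by auto
  ultimately show ?thesis
    by simp
qed

lemma card_bad_residues_vertex_minus:
  assumes "finite X"
  shows "card (bad_residues n (\<lambda>r. nd_vertex n (a - r) \<notin> X)) \<le> card X"
proof -
  have "card (bad_residues n (\<lambda>r. nd_vertex n (a - r) \<noteq> v)) \<le> 1" for v
  proof (rule card_bad_residues_le_1)
    fix r s assume "r \<in> bad_residues n (\<lambda>r. nd_vertex n (a - r) \<noteq> v)"
      "s \<in> bad_residues n (\<lambda>r. nd_vertex n (a - r) \<noteq> v)"
    then have "nd_vertex n (a - s) = nd_vertex n (a - r)"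
      by (simp add: bad_residues_def)
    then have "nd_modulus n dvd (a - s) - (a - r)"
      by (simp only: nd_vertex_eq_iff)
    then show "nd_modulus n dvd r - s"
      by simp
  qed
  then have "card (bad_residues n (\<lambda>r. \<forall>v\<in>X. nd_vertex n (a - r) \<noteq> v)) \<le> 1 * card X"
    by (intro card_bad_residues_Ball[OF assms])
  moreover have "(\<lambda>r. \<forall>v\<in>X. nd_vertex n (a - r) \<noteq> v) = (\<lambda>r. nd_vertex n (a - r) \<notin> X)"
    by auto
  ultimately show ?thesis
    by simp
qed

lemma card_bad_residues_colour_minus:
  assumes "finite S"
  shows "card (bad_residues n (\<lambda>r. nd_colour n (a - r) \<notin> S)) \<le> 2 * card S"
proof -
  have "card (bad_residues n (\<lambda>r. nd_colour n (a - r) \<noteq> k)) \<le> 2" for k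
  proof (rule card_bad_residues_mono)
    show "card (bad_residues n (\<lambda>r. \<not> nd_modulus n dvd (a - int k) - r \<and>
        \<not> nd_modulus n dvd (a + int k) - r)) \<le> 2"
      using card_bad_residues_conj[OF card_bad_residues_dvd[of n "a - int k"]
          card_bad_residues_dvd[of n "a + int k"]] by simp
  next
    fix r assume "\<not> nd_colour n (a - r) \<noteq> k"
    then have "nd_colour n (a - r) = nd_colour n (int k)"
      using nd_colour_le[of n "a - r"] by simp
    moreover have "(a - r) - int k = (a - int k) - r" "(a - r) + int k = (a + int k) - r"
      by simp_all
    ultimately show "\<not> (\<not> nd_modulus n dvd (a - int k) - r \<and> \<not> nd_modulus n dvd (a + int k) - r)"
      unfolding nd_colour_eq_iff by metis
  qed
  then have "card (bad_residues n (\<lambda>r. \<forall>k\<in>S. nd_colour n (a - r) \<noteq> k)) \<le> 2 * card S"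
    by (intro card_bad_residues_Ball[OF assms])
  moreover have "(\<lambda>r. \<forall>k\<in>S. nd_colour n (a - r) \<noteq> k) = (\<lambda>r. nd_colour n (a - r) \<notin> S)"
    by auto
  ultimately show ?thesis
    by simp
qed

lemma card_bad_residues_colour:
  assumes "finite S"
  shows "card (bad_residues n (\<lambda>r. nd_colour n r \<notin> S)) \<le> 2 * card S"
  using card_bad_residues_colour_minus[OF assms, of n 0] by simp

lemma card_bad_residues_colour_neq_colour_minus:
  assumes "\<not> nd_modulus n dvd a"
  shows "card (bad_residues n (\<lambda>r. nd_colour n r \<noteq> nd_colour n (a - r))) \<le> 1"
proof (rule card_bad_residues_le_1)
  have double: "nd_modulus n dvd 2 * r - a"
    if "r \<in> bad_residues n (\<lambda>r. nd_colour n r \<noteq> nd_colour n (a - r))" for r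
    using that assms by (auto simp: bad_residues_def nd_colour_eq_iff algebra_simps)
  fix r s assume "r \<in> bad_residues n (\<lambda>r. nd_colour n r \<noteq> nd_colour n (a - r))"
    "s \<in> bad_residues n (\<lambda>r. nd_colour n r \<noteq> nd_colour n (a - r))"
  then have "nd_modulus n dvd (2 * r - a) - (2 * s - a)"
    using double dvd_diff by blast
  also have "(2 * r - a) - (2 * s - a) = 2 * (r - s)"
    by simp
  finally show "nd_modulus n dvd r - s"
    by (simp only: nd_modulus_dvd_double_iff)
qed

lemma ex_residue_step:
  assumes "finite X" "finite K" "card X + 2 * card K \<le> 2 * n"
  shows "\<exists>r. nd_vertex n (a + r) \<notin> X \<and> nd_colour n r \<notin> K"
proof -
  have "card (bad_residues n (\<lambda>r. nd_vertex n (a + r) \<notin> X \<and> nd_colour n r \<notin> K))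
      \<le> card X + 2 * card K"
    using assms(1,2)
    by (intro card_bad_residues_conj card_bad_residues_vertex_plus card_bad_residues_colour)
  then show ?thesis
    using assms(3) by (auto dest: ex_good_residue)
qed

lemma ex_residue_step_pair:
  assumes "finite X" "finite K" "2 * card X + 2 * card K \<le> 2 * n"
  shows "\<exists>r. nd_vertex n (a + r) \<notin> X \<and> nd_vertex n (a + s + r) \<notin> X \<and> nd_colour n r \<notin> K"
proof -
  \<comment> \<open>The bound is nested like the conjunction so that card_bad_residues_conj applies.\<close>
  have "card (bad_residues n (\<lambda>r. nd_vertex n (a + r) \<notin> X \<and> nd_vertex n (a + s + r) \<notin> X \<and>
      nd_colour n r \<notin> K)) \<le> card X + (card X + 2 * card K)"
    using assms(1,2) by (intro card_bad_residues_conj card_bad_residues_vertex_plus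
        card_bad_residues_colour)
  then show ?thesis
    using assms(3) by (auto dest: ex_good_residue)
qed

lemma ex_residue_closing_steps:
  assumes "\<not> nd_modulus n dvd b" "finite X" "finite K" "card X + 4 * card K + 1 \<le> 2 * n"
  shows "\<exists>r. nd_vertex n (a + r) \<notin> X \<and> nd_colour n r \<notin> K \<and> nd_colour n (b - r) \<notin> K \<and>
    nd_colour n r \<noteq> nd_colour n (b - r)"
proof -
  have "card (bad_residues n (\<lambda>r. nd_vertex n (a + r) \<notin> X \<and> nd_colour n r \<notin> K \<and>
      nd_colour n (b - r) \<notin> K \<and> nd_colour n r \<noteq> nd_colour n (b - r)))
    \<le> card X + (2 * card K + (2 * card K + 1))"
    using assms(1-3) by (intro card_bad_residues_conj card_bad_residues_vertex_plus
        card_bad_residues_colour card_bad_residues_colour_minus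
        card_bad_residues_colour_neq_colour_minus)
  then show ?thesis
    using assms(4) by (auto dest: ex_good_residue)
qed

lemma ex_switch_parameter:
  assumes "\<not> nd_modulus n dvd h" "finite W" "finite K" "4 * card W + 4 * card K + 1 \<le> 2 * n"
  shows "\<exists>t. nd_vertex n (e + t) \<notin> W \<and> nd_vertex n (e + a + t) \<notin> W \<and>
    nd_vertex n (e - t) \<notin> W \<and> nd_vertex n (e + b - t) \<notin> W \<and>
    nd_colour n t \<notin> K \<and> nd_colour n (h - t) \<notin> K \<and> nd_colour n t \<noteq> nd_colour n (h - t)"
proof -
  have "card (bad_residues n (\<lambda>r. nd_vertex n (e + r) \<notin> W \<and>
      nd_vertex n (e + a + r) \<notin> W \<and> nd_vertex n (e - r) \<notin> W \<and>
      nd_vertex n (e + b - r) \<notin> W \<and> nd_colour n r \<notin> K \<and>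
      nd_colour n (h - r) \<notin> K \<and> nd_colour n r \<noteq> nd_colour n (h - r)))
    \<le> card W + (card W + (card W + (card W + (2 * card K + (2 * card K + 1)))))"
    using assms(1-3)
    by (intro card_bad_residues_conj card_bad_residues_vertex_plus card_bad_residues_vertex_minus
        card_bad_residues_colour card_bad_residues_colour_minus
        card_bad_residues_colour_neq_colour_minus) simp_all
  then show ?thesis
    using assms(4) by (auto dest: ex_good_residue)
qed

section \<open>Paths\<close>

lemma path_edges_Cons_Cons: "path_edges (a # b # P) = (a, b) # path_edges (b # P)"
  by (simp add: path_edges_def)

lemma path_edges_append:
  assumes "P \<noteq> []" "last P = hd Q" "Q \<noteq> []"
  shows "path_edges (P @ tl Q) = path_edges P @ path_edges Q"
  using assms
proof (induction P rule: induct_list012)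
  case (2 z)
  then show ?case
    by (cases Q) (simp_all add: path_edges_def)
next
  case (3 a b P)
  then show ?case
    by (simp add: path_edges_Cons_Cons)
qed simp

lemma path_colours_append:
  "P \<noteq> [] \<Longrightarrow> last P = hd Q \<Longrightarrow> Q \<noteq> [] \<Longrightarrow>
    path_colours n (P @ tl Q) = path_colours n P @ path_colours n Q"
  by (simp add: path_colours_def path_edges_append)

lemma length_path_colours [simp]: "length (path_colours n P) = length P - 1"
  by (simp add: path_colours_def path_edges_def)

lemma path_colours_map_nd_vertex:
  "path_colours n (map (nd_vertex n) (a # b # zs)) =
    nd_colour n (a - b) # path_colours n (map (nd_vertex n) (b # zs))"
  "path_colours n (map (nd_vertex n) [a]) = []"
  by (simp_all add: path_colours_def path_edges_def nd_col_nd_vertex)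

lemma path_colours_subset_nd_colours:
  assumes "is_xy_path n x y L P"
  shows "set (path_colours n P) \<subseteq> nd_colours n"
proof
  fix c assume "c \<in> set (path_colours n P)"
  then obtain i where "i < length P - 1" and c: "c = nd_col n (P ! i) (P ! Suc i)"
    by (auto simp: path_colours_def path_edges_def set_zip nth_butlast nth_tl)
  then have i: "Suc i < length P"
    by linarith
  have "distinct P" "\<forall>v\<in>set P. v \<le> 2 * n"
    using assms by (auto simp: is_xy_path_def nd_vertices_def)
  then have "P ! i \<noteq> P ! Suc i" "P ! i \<le> 2 * n" "P ! Suc i \<le> 2 * n"
    using i by (simp_all add: nth_eq_iff_index_eq list_ball_nth)
  then have "\<not> nd_modulus n dvd int (P ! i) - int (P ! Suc i)"
    by (intro not_dvd_nd_modulus_if_small) auto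
  then show "c \<in> nd_colours n"
    using c nd_col_nd_vertex[of n "int (P ! i)" "int (P ! Suc i)"] \<open>P ! i \<le> 2 * n\<close>
      \<open>P ! Suc i \<le> 2 * n\<close> by (simp add: nd_colour_in_nd_colours)
qed

lemma interior_append:
  "P \<noteq> [] \<Longrightarrow> tl Q \<noteq> [] \<Longrightarrow> interior (P @ tl Q) = set (tl P) \<union> interior Q"
  by (cases P) (simp_all add: interior_def butlast_append)

lemma endpoints_in_set_if_is_xy_path: "is_xy_path n x y L P \<Longrightarrow> x \<in> set P \<and> y \<in> set P"
  by (cases P) (auto simp: is_xy_path_def)

lemma set_tl_eq_interior:
  "is_xy_path n x y L P \<Longrightarrow> 0 < L \<Longrightarrow> set (tl P) = insert y (interior P)"
  by (cases P rule: rev_cases) (auto simp: is_xy_path_def interior_def butlast_tl[symmetric])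

lemma set_eq_interior:
  "is_xy_path n x y L P \<Longrightarrow> 0 < L \<Longrightarrow> set P = insert x (insert y (interior P))"
  using set_tl_eq_interior[of n x y L P] by (cases P) (auto simp: is_xy_path_def)

lemma is_xy_path_append:
  assumes "is_xy_path n x z k P" "is_xy_path n z y l Q" "set P \<inter> set (tl Q) = {}"
  shows "is_xy_path n x y (k + l) (P @ tl Q)"
proof -
  have "P \<noteq> []" "Q \<noteq> []"
    using assms(1,2) by (auto simp: is_xy_path_def)
  then have "last (P @ tl Q) = last Q"
    using assms(1,2) by (cases Q) (auto simp: is_xy_path_def)
  with assms \<open>P \<noteq> []\<close> \<open>Q \<noteq> []\<close> show ?thesis
    by (auto simp: is_xy_path_def distinct_tl dest: list.set_sel(2))
qed

lemma rainbow_append: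
  assumes "rainbow n D P" "rainbow n E Q" "D \<inter> E = {}"
    "P \<noteq> []" "last P = hd Q" "Q \<noteq> []"
  shows "rainbow n (D \<union> E) (P @ tl Q)"
  using assms by (auto simp: rainbow_def path_colours_append)

lemma rainbow_path_append:
  assumes "is_xy_path n x z k P" "rainbow n D P" "is_xy_path n z y l Q" "rainbow n E Q"
    and "D \<inter> E = {}" "set P \<inter> set (tl Q) = {}"
  shows "is_xy_path n x y (k + l) (P @ tl Q) \<and> rainbow n (D \<union> E) (P @ tl Q)"
proof -
  have "P \<noteq> []" "Q \<noteq> []" "last P = hd Q"
    using assms(1,3) by (auto simp: is_xy_path_def)
  then show ?thesis
    using assms by (simp add: is_xy_path_append rainbow_append)
qed

lemma rainbow_path_Cons:
  assumes "is_xy_path n p q k P" "rainbow n D P" "x \<in> nd_vertices n" "x \<notin> set P" "nd_col n x p \<notin> D"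
  shows "is_xy_path n x q (Suc k) (x # P) \<and> rainbow n (insert (nd_col n x p) D) (x # P)"
proof -
  obtain P' where "P = p # P'"
    using assms(1) by (cases P) (auto simp: is_xy_path_def)
  then show ?thesis
    using assms by (auto simp: is_xy_path_def rainbow_def path_colours_def path_edges_Cons_Cons)
qed

lemma rainbow_path_colour_set:
  assumes "is_xy_path n x y L P" "rainbow n (- S) P"
  shows "card (set (path_colours n P)) = L" "set (path_colours n P) \<subseteq> nd_colours n - S"
    and "rainbow n (set (path_colours n P)) P"
  using assms path_colours_subset_nd_colours[OF assms(1)]
  by (auto simp: rainbow_def is_xy_path_def distinct_card)

lemma rainbow_path_concat:
  assumes "is_xy_path n x z k P" "rainbow n D P" "y \<notin> set P" "set (tl P) \<inter> X = {}"
    and "is_xy_path n z y l Q" "rainbow n E Q" "D \<inter> E = {}" "interior Q \<inter> (X \<union> set P) = {}"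
    and "0 < l"
  shows "is_xy_path n x y (k + l) (P @ tl Q) \<and> rainbow n (D \<union> E) (P @ tl Q) \<and>
    interior (P @ tl Q) \<subseteq> nd_vertices n - X"
proof -
  have "set P \<inter> set (tl Q) = {}"
    using set_tl_eq_interior[OF assms(5,9)] assms(3,8) by auto
  then have path: "is_xy_path n x y (k + l) (P @ tl Q) \<and> rainbow n (D \<union> E) (P @ tl Q)"
    using rainbow_path_append[OF assms(1,2,5,6,7)] by blast
  have "P \<noteq> []" "tl Q \<noteq> []"
    using assms(1,5,9) by (auto simp: is_xy_path_def simp flip: length_greater_0_conv)
  then have "interior (P @ tl Q) = set (tl P) \<union> interior Q"
    by (rule interior_append)
  moreover have "set (tl P) \<subseteq> set P"
    by (cases P) auto
  moreover have "interior Q \<subseteq> set Q"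
    by (cases Q) (auto simp: interior_def dest: in_set_butlastD)
  ultimately show ?thesis
    using path assms(1,4,5,8) by (auto simp: is_xy_path_def)
qed

section \<open>The construction\<close>

lemma rainbow_connection:
  assumes "z \<in> nd_vertices n" "y \<in> nd_vertices n" "z \<noteq> y" "finite V" "finite S"
    and "card V + 4 * card S + 8 \<le> 2 * n"
  shows "\<exists>Q. is_xy_path n z y 3 Q \<and> rainbow n (- S) Q \<and> interior Q \<inter> V = {}"
proof -
  let ?V = "insert z (insert y V)"
  have card_V: "card ?V \<le> card V + 2"
    using card_insert_le_Suc[of z "insert y V"] card_insert_le_Suc[of y V] by simp
  then obtain v where v: "nd_vertex n (int z + v) \<notin> ?V" "nd_colour n v \<notin> S"
    using ex_residue_step[of ?V S n "int z"] assms(4-6) by auto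
  define e Y where "e = int z + v" and "Y = int y - e"
  have e: "nd_vertex n e \<notin> ?V"
    using v(1) by (simp add: e_def)
  then have "\<not> nd_modulus n dvd Y"
    using assms(2) by (auto simp: nd_vertices_def Y_def dvd_diff_commute[of _ "int y"]
        simp flip: nd_vertex_eq_iff)
  moreover have "finite (insert (nd_vertex n e) ?V)" "finite (insert (nd_colour n v) S)"
    using assms(4,5) by simp_all
  moreover have "card (insert (nd_vertex n e) ?V) + 4 * card (insert (nd_colour n v) S) + 1 \<le> 2 * n"
    using card_V card_insert_le_Suc[of "nd_vertex n e" ?V] card_insert_le_Suc[of "nd_colour n v" S]
      assms(6) by linarith
  ultimately obtain w where w: "nd_vertex n (e + w) \<notin> insert (nd_vertex n e) ?V"
      "nd_colour n w \<notin> insert (nd_colour n v) S" "nd_colour n (Y - w) \<notin> insert (nd_colour n v) S"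
      "nd_colour n w \<noteq> nd_colour n (Y - w)"
    by (blast dest: ex_residue_closing_steps[where a = e])
  define Q where "Q = map (nd_vertex n) [int z, e, e + w, int y]"
  have "int z - e = - v" "e - (e + w) = - w" "e + w - int y = - (Y - w)"
    by (simp_all add: e_def Y_def)
  then have "path_colours n Q = [nd_colour n v, nd_colour n w, nd_colour n (Y - w)]"
    unfolding Q_def path_colours_map_nd_vertex by (simp only: nd_colour_uminus list.map)
  then have "rainbow n (- S) Q"
    using v(2) w by (auto simp: rainbow_def)
  moreover have "is_xy_path n z y 3 Q"
    using e w assms(1-3) by (auto simp: is_xy_path_def Q_def nd_vertices_def)
  moreover have "interior Q \<inter> V = {}"
    using e w by (auto simp: interior_def Q_def)
  ultimately show ?thesis
    by blast
qed

definition switch_path :: "nat \<Rightarrow> int \<Rightarrow> int \<Rightarrow> int \<Rightarrow> int \<Rightarrow> nat list" where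
  "switch_path n e a t f = map (nd_vertex n) [e, e + t, e + a + t, f]"

lemma path_colours_switch_path:
  "path_colours n (switch_path n e a t f) =
    [nd_colour n t, nd_colour n a, nd_colour n (f - e - a - t)]"
proof -
  have "e - (e + t) = - t" "e + t - (e + a + t) = - a" "e + a + t - f = - (f - e - a - t)"
    by simp_all
  then show ?thesis
    unfolding switch_path_def path_colours_map_nd_vertex by (simp only: nd_colour_uminus list.map)
qed

lemma is_xy_path_switch_path:
  assumes "nd_vertex n e \<noteq> nd_vertex n f" "\<not> nd_modulus n dvd a"
    and "nd_vertex n (e + t) \<notin> insert (nd_vertex n e) (insert (nd_vertex n f) W)"
    and "nd_vertex n (e + a + t) \<notin> insert (nd_vertex n e) (insert (nd_vertex n f) W)"
  shows "is_xy_path n (nd_vertex n e) (nd_vertex n f) 3 (switch_path n e a t f)"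
    and "interior (switch_path n e a t f) \<inter> W = {}"
proof -
  have "nd_vertex n (e + t) \<noteq> nd_vertex n (e + a + t)"
    using assms(2) by (simp add: nd_vertex_eq_iff)
  then show "is_xy_path n (nd_vertex n e) (nd_vertex n f) 3 (switch_path n e a t f)"
    using assms by (auto simp: is_xy_path_def switch_path_def)
  show "interior (switch_path n e a t f) \<inter> W = {}"
    using assms(3,4) by (auto simp: interior_def switch_path_def)
qed

lemma colour_switch:
  assumes "p \<in> nd_vertices n" "q = nd_vertex n (int p + nd_half n (int c1 + int c2))"
    and "c1 \<in> nd_colours n" "c2 \<in> nd_colours n" "c1 \<noteq> c2" "c1 \<in> K" "c2 \<in> K"
    and "p \<notin> W" "q \<notin> W" "finite W" "finite K" "4 * card W + 4 * card K + 9 \<le> 2 * n"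
  shows "\<exists>C0. card C0 = 2 \<and> C0 \<subseteq> nd_colours n - K \<and>
    (\<forall>c\<in>{c1, c2}. \<exists>P. is_xy_path n p q 3 P \<and> rainbow n (C0 \<union> {c}) P \<and> set P \<inter> W = {})"
proof -
  define a1 a2 e s where "a1 = int c1" and "a2 = int c2" and "e = int p"
    and "s = nd_half n (a1 + a2)"
  define f where "f = e + s"
  note not_dvd = nd_colours_not_dvd[OF assms(3-5), folded a1_def a2_def]
    nd_half_sum_not_dvd[OF assms(3-5), folded a1_def a2_def, folded s_def]
  have "nd_vertex n e \<noteq> nd_vertex n f"
    using not_dvd(5) by (simp add: f_def nd_vertex_eq_iff)
  moreover have "nd_vertex n e = p" "nd_vertex n f = q"
    using assms(1,2) by (simp_all add: e_def f_def s_def a1_def a2_def nd_vertices_def)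
  ultimately have ef: "nd_vertex n e = p" "nd_vertex n f = q" "nd_vertex n e \<noteq> nd_vertex n f"
    by simp_all
  let ?W = "insert p (insert q W)"
  have "4 * card ?W + 4 * card K + 1 \<le> 2 * n" "finite ?W"
    using card_insert_le_Suc[of p "insert q W"] card_insert_le_Suc[of q W] assms(10,12) by auto
  then obtain t where t: "nd_vertex n (e + t) \<notin> ?W" "nd_vertex n (e + a1 + t) \<notin> ?W"
      "nd_vertex n (e - t) \<notin> ?W" "nd_vertex n (e + a2 - t) \<notin> ?W" "nd_colour n t \<notin> K"
      "nd_colour n (s - a1 - t) \<notin> K" "nd_colour n t \<noteq> nd_colour n (s - a1 - t)"
    using ex_switch_parameter[OF not_dvd(6) _ assms(11), where e = e and a = a1 and b = a2] by blast
  define P1 P2 where "P1 = switch_path n e a1 t f" and "P2 = switch_path n e a2 (- t) f"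
  have paths: "is_xy_path n p q 3 P1" "is_xy_path n p q 3 P2"
      "interior P1 \<inter> ?W = {}" "interior P2 \<inter> ?W = {}"
    using is_xy_path_switch_path[of n e f _ _ ?W] not_dvd(1,2) t(1-4) ef
    by (simp_all add: P1_def P2_def)
  have "nd_colour n (s - a2 - - t) = nd_colour n (s - a1 - t)"
    using nd_modulus_dvd_double_nd_half[of n "a1 + a2"]
    by (intro nd_colour_switch_last_edges) (simp add: s_def)
  then have colours: "path_colours n P1 = [nd_colour n t, c1, nd_colour n (s - a1 - t)]"
      "path_colours n P2 = [nd_colour n t, c2, nd_colour n (s - a1 - t)]"
    using assms(3,4) by (simp_all add: P1_def P2_def path_colours_switch_path f_def
        a1_def a2_def nd_colours_def)
  define C0 where "C0 = {nd_colour n t, nd_colour n (s - a1 - t)}"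
  have "card C0 = 2"
    using t(7) by (simp add: C0_def)
  moreover have "C0 \<subseteq> nd_colours n - K"
    using path_colours_subset_nd_colours[OF paths(1)] colours(1) t(5,6) by (auto simp: C0_def)
  moreover have "rainbow n (C0 \<union> {c1}) P1" "rainbow n (C0 \<union> {c2}) P2"
    using colours t(5-7) assms(6,7) by (auto simp: rainbow_def C0_def)
  moreover have "set P1 \<inter> W = {}" "set P2 \<inter> W = {}"
    using set_eq_interior[OF paths(1)] set_eq_interior[OF paths(2)] paths(3,4) assms(8,9) by auto
  ultimately show ?thesis
    using paths(1,2) by blast
qed

lemma ex_first_edge:
  assumes "x \<in> nd_vertices n" "x \<in> W" "finite W" "finite K" "2 * card W + 2 * card K \<le> 2 * n"
  shows "\<exists>p. p \<in> nd_vertices n \<and> p \<notin> W \<and> nd_vertex n (int p + s) \<notin> W \<and>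
    nd_col n x p \<in> nd_colours n - K"
proof -
  obtain u where u: "nd_vertex n (int x + u) \<notin> W" "nd_vertex n (int x + s + u) \<notin> W"
      "nd_colour n u \<notin> K"
    using ex_residue_step_pair[OF assms(3-5)] by blast
  define p where "p = nd_vertex n (int x + u)"
  have "nd_vertex n (int p + s) = nd_vertex n (int x + s + u)"
    unfolding p_def nd_vertex_plus_nd_vertex by (simp add: ac_simps)
  with u have "p \<in> nd_vertices n" "p \<notin> W" "nd_vertex n (int p + s) \<notin> W"
    by (simp_all add: p_def)
  moreover have "nd_col n x p = nd_colour n u"
    using nd_col_nd_vertex[of n "int x" "int x + u"] assms(1) by (simp add: p_def nd_vertices_def)
  moreover have "nd_vertex n (int x + u) \<noteq> nd_vertex n (int x)"
    using u(1) assms(1,2) by (auto simp: nd_vertices_def)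
  then have "nd_colour n u \<in> nd_colours n"
    by (intro nd_colour_in_nd_colours) (simp add: nd_vertex_eq_iff)
  ultimately show ?thesis
    using u(3) by auto
qed

lemma switching_paths:
  assumes "x \<in> nd_vertices n" "y \<in> nd_vertices n" "x \<noteq> y"
    and "c1 \<in> nd_colours n" "c2 \<in> nd_colours n" "c1 \<noteq> c2" "c1 \<in> K" "c2 \<in> K"
    and "finite X" "finite K" "4 * card X + 4 * card K + 21 \<le> 2 * n"
  shows "\<exists>z C0. card C0 = 3 \<and> C0 \<subseteq> nd_colours n - K \<and>
    (\<forall>c\<in>{c1, c2}. \<exists>P. is_xy_path n x z 4 P \<and> rainbow n (C0 \<union> {c}) P \<and>
      y \<notin> set P \<and> set (tl P) \<inter> X = {})"
proof -
  let ?X = "insert x (insert y X)"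
  have card_X: "card ?X \<le> card X + 2"
    using card_insert_le_Suc[of x "insert y X"] card_insert_le_Suc[of y X] by simp
  then obtain p where p: "p \<in> nd_vertices n" "p \<notin> ?X"
      "nd_vertex n (int p + nd_half n (int c1 + int c2)) \<notin> ?X" "nd_col n x p \<in> nd_colours n - K"
    using ex_first_edge[of x n ?X K] assms(1,9-11) by auto
  define q where "q = nd_vertex n (int p + nd_half n (int c1 + int c2))"
  have "4 * card ?X + 4 * card (insert (nd_col n x p) K) + 9 \<le> 2 * n"
    using card_X card_insert_le_Suc[of "nd_col n x p" K] assms(11) by linarith
  then obtain C1 where C1: "card C1 = 2" "C1 \<subseteq> nd_colours n - insert (nd_col n x p) K"
    and switch: "\<forall>c\<in>{c1, c2}. \<exists>P. is_xy_path n p q 3 P \<and> rainbow n (C1 \<union> {c}) P \<and>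
      set P \<inter> ?X = {}"
    using colour_switch[of p n q c1 c2 "insert (nd_col n x p) K" ?X] p assms(4-10)
    by (auto simp: q_def)
  have "finite C1" "nd_col n x p \<notin> C1"
    using C1 card_ge_0_finite[of C1] by auto
  then have "card (insert (nd_col n x p) C1) = 3" "insert (nd_col n x p) C1 \<subseteq> nd_colours n - K"
    using C1 p(4) by auto
  moreover have "\<exists>P. is_xy_path n x q 4 P \<and> rainbow n (insert (nd_col n x p) C1 \<union> {c}) P \<and>
      y \<notin> set P \<and> set (tl P) \<inter> X = {}" if "c \<in> {c1, c2}" for c
  proof -
    from that switch obtain P where P: "is_xy_path n p q 3 P" "rainbow n (C1 \<union> {c}) P"
        "set P \<inter> ?X = {}"
      by blast
    moreover have "nd_col n x p \<notin> C1 \<union> {c}"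
      using C1(2) that assms(7,8) p(4) by auto
    ultimately have "is_xy_path n x q (Suc 3) (x # P) \<and>
        rainbow n (insert (nd_col n x p) (C1 \<union> {c})) (x # P)"
      using rainbow_path_Cons[OF P(1,2) assms(1)] by auto
    with P(3) assms(3) show ?thesis
      by (intro exI[of _ "x # P"]) (auto simp: numeral_eq_Suc insert_commute)
  qed
  ultimately show ?thesis
    by blast
qed

lemma rainbow_paths_with_common_colours:
  assumes "x \<in> nd_vertices n" "y \<in> nd_vertices n" "x \<noteq> y"
    and "c1 \<in> nd_colours n" "c2 \<in> nd_colours n" "c1 \<noteq> c2" "c1 \<in> K" "c2 \<in> K"
    and "finite X" "finite K" "4 * card X + 4 * card K + 30 \<le> 2 * n"
  shows "\<exists>C'. C' \<subseteq> nd_colours n - K \<and> card C' = 6 \<and>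
    (\<forall>c\<in>{c1, c2}. \<exists>P. is_xy_path n x y 7 P \<and> rainbow n (C' \<union> {c}) P \<and>
      interior P \<subseteq> nd_vertices n - X)"
proof -
  obtain z C0 where C0: "card C0 = 3" "C0 \<subseteq> nd_colours n - K"
    and switch: "\<forall>c\<in>{c1, c2}. \<exists>P. is_xy_path n x z 4 P \<and> rainbow n (C0 \<union> {c}) P \<and>
      y \<notin> set P \<and> set (tl P) \<inter> X = {}"
    using switching_paths[OF assms(1-10)] assms(11) by auto
  then obtain P1 P2
    where P1: "is_xy_path n x z 4 P1" "rainbow n (C0 \<union> {c1}) P1" "y \<notin> set P1" "set (tl P1) \<inter> X = {}"
      and P2: "is_xy_path n x z 4 P2" "rainbow n (C0 \<union> {c2}) P2" "y \<notin> set P2" "set (tl P2) \<inter> X = {}"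
    by blast
  have z: "z \<in> nd_vertices n" "z \<noteq> y"
    using endpoints_in_set_if_is_xy_path[OF P1(1)] P1 by (auto simp: is_xy_path_def)
  have finite: "finite (X \<union> set P1 \<union> set P2)" "finite (K \<union> C0)"
    using assms(9,10) C0(1) card_ge_0_finite[of C0] by auto
  have "card (X \<union> set P1 \<union> set P2) + 4 * card (K \<union> C0) + 8 \<le> 2 * n"
    using card_Un_le[of X "set P1"] card_Un_le[of "X \<union> set P1" "set P2"] card_Un_le[of K C0]
      card_length[of P1] card_length[of P2] P1(1) P2(1) C0(1) assms(11)
    by (simp add: is_xy_path_def)
  from rainbow_connection[OF z(1) assms(2) z(2) finite this]
  obtain Q where Q: "is_xy_path n z y 3 Q" "rainbow n (- (K \<union> C0)) Q"
      "interior Q \<inter> (X \<union> set P1 \<union> set P2) = {}"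
    by blast
  note C1 = rainbow_path_colour_set[OF Q(1,2)]
  show ?thesis
  proof (intro exI[of _ "C0 \<union> set (path_colours n Q)"] conjI ballI)
    show "C0 \<union> set (path_colours n Q) \<subseteq> nd_colours n - K"
      using C0(2) C1(2) by auto
    show "card (C0 \<union> set (path_colours n Q)) = 6"
      using C0(1) C1(1,2) card_ge_0_finite[of C0] by (subst card_Un_disjoint) auto
    fix c assume c: "c \<in> {c1, c2}"
    then obtain P where P: "is_xy_path n x z 4 P" "rainbow n (C0 \<union> {c}) P" "y \<notin> set P"
        "set (tl P) \<inter> X = {}" "interior Q \<inter> (X \<union> set P) = {}"
      using P1 P2 Q(3) by auto
    have "(C0 \<union> {c}) \<inter> set (path_colours n Q) = {}"
      using C1(2) c assms(7,8) by auto
    from rainbow_path_concat[OF P(1-4) Q(1) C1(3) this P(5)]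
    show "\<exists>P. is_xy_path n x y 7 P \<and> rainbow n (C0 \<union> set (path_colours n Q) \<union> {c}) P \<and>
        interior P \<subseteq> nd_vertices n - X"
      by (auto simp: Un_ac)
  qed
qed

theorem lemma5p2:
  shows "\<exists>N. \<forall>n\<ge>N. \<forall>x y c1 c2 X C.
    x \<in> nd_vertices n \<and> y \<in> nd_vertices n \<and> x \<noteq> y \<and>
    c1 \<in> nd_colours n \<and> c2 \<in> nd_colours n \<and> c1 \<noteq> c2 \<and>
    X \<subseteq> nd_vertices n \<and> C \<subseteq> nd_colours n \<and>
    25 * card X \<le> n \<and> 25 * card C \<le> n \<longrightarrow>
    (\<exists>C'. C' \<subseteq> nd_colours n - (C \<union> {c1, c2}) \<and> card C' = 6 \<and>
       (\<forall>c\<in>{c1, c2}. \<exists>P. is_xy_path n x y 7 P \<and> rainbow n (C' \<union> {c}) P \<and>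
          interior P \<subseteq> nd_vertices n - X))"
proof (intro exI[of _ 25] allI impI, elim conjE)
  fix n x y c1 c2 and X C :: "nat set"
  assume "25 \<le> n" "x \<in> nd_vertices n" "y \<in> nd_vertices n" "x \<noteq> y"
    and c: "c1 \<in> nd_colours n" "c2 \<in> nd_colours n" "c1 \<noteq> c2"
    and "X \<subseteq> nd_vertices n" "C \<subseteq> nd_colours n" "25 * card X \<le> n" "25 * card C \<le> n"
  have finite: "finite X" "finite (C \<union> {c1, c2})"
    using \<open>X \<subseteq> _\<close> \<open>C \<subseteq> _\<close> finite_subset by (auto simp: nd_vertices_def nd_colours_def)
  have "card (C \<union> {c1, c2}) \<le> card C + 2"
    using card_insert_le_Suc[of c1 "insert c2 C"] card_insert_le_Suc[of c2 C] by simp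
  with \<open>25 \<le> n\<close> \<open>25 * card X \<le> n\<close> \<open>25 * card C \<le> n\<close>
  have "4 * card X + 4 * card (C \<union> {c1, c2}) + 30 \<le> 2 * n"
    by linarith
  with finite show "\<exists>C'. C' \<subseteq> nd_colours n - (C \<union> {c1, c2}) \<and> card C' = 6 \<and>
      (\<forall>c\<in>{c1, c2}. \<exists>P. is_xy_path n x y 7 P \<and> rainbow n (C' \<union> {c}) P \<and>
        interior P \<subseteq> nd_vertices n - X)"
    using \<open>x \<in> _\<close> \<open>y \<in> _\<close> \<open>x \<noteq> y\<close> c by (intro rainbow_paths_with_common_colours) auto
qed

end
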